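(* Consider an instance of the problem $P_m \mid r_j \le d \mid \sum w_j F_j$ as defined in the context (finite job set $J$, processing times $p_j>0$, weights $w_j>0$, deadline $d\ge 0$, $m\ge 1$ identical machines). In every optimal solution $(\pi_1,\dots,\pi_m)$, for each machine $i$, the jobs of $J_{\mathrm{late}}(\pi_i)$ (the jobs on machine $i$ starting at or after $d$) appear in $\pi_i$ in nondecreasing order of the ratio $p_j/w_j$ (i.e. they are sorted according to the WSPT rule).
   Context: An instance consists of a finite set $J$ of jobs, each job $j$ having a processing time $p_j>0$ and a weight $w_j>0$, a common deadline $d\ge 0$, and a number $m\ge 1$ of identical machines. A single-machine schedule is a finite sequence $\pi$ of distinct jobs processed consecutively without idle time starting at time $0$: the start time of job $j$ in $\pi$ is $S_j=\sum_{k \text{ before } j \text{ in } \pi} p_k$ and its completion time is $C_j=S_j+p_j$. Let $J_{\mathrm{pri}}(\pi)=\{j\in\pi : S_j<d\}$ and $J_{\mathrm{late}}(\pi)=\{j\in\pi: S_j\ge d\}$. The cost of $\pi$ is $$\phi(\pi)=\sum_{j\in J_{\mathrm{pri}}(\pi)} w_j p_j+\sum_{j\in J_{\mathrm{late}}(\pi)} w_j\,(C_j-d).$$ (This is the total weighted flowtime $\sum_j w_j(C_j-r_j)$ when each release date $r_j$ is a decision variable constrained by $r_j\le d$ and chosen optimally as $r_j=\min(S_j,d)$.) A solution is a tuple $(\pi_1,\dots,\pi_m)$ of single-machine schedules such that every job of $J$ appears in exactly one $\pi_i$; its cost is $\sum_{i=1}^m\phi(\pi_i)$, and a solution is optimal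 if its cost is minimal among all solutions. This problem is denoted $P_m \mid r_j \le d \mid \sum w_j F_j$. *)

theory Defs
  imports Main "HOL-Library.Multiset" Complex_Main
begin

text \<open>A single-machine schedule is a list of distinct jobs processed without idle time
from time 0. Positions are indexed by k < length xs.\<close>

definition start_time :: "('j \<Rightarrow> real) \<Rightarrow> 'j list \<Rightarrow> nat \<Rightarrow> real" where
  "start_time p xs k = (\<Sum>i<k. p (xs ! i))"

definition compl_time :: "('j \<Rightarrow> real) \<Rightarrow> 'j list \<Rightarrow> nat \<Rightarrow> real" where
  "compl_time p xs k = start_time p xs k + p (xs ! k)"

definition sched_cost :: "('j \<Rightarrow> real) \<Rightarrow> ('j \<Rightarrow> real) \<Rightarrow> real \<Rightarrow> 'j list \<Rightarrow> real" where
  "sched_cost p w d xs =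
     (\<Sum>k<length xs. if start_time p xs k < d
                      then w (xs ! k) * p (xs ! k)
                      else w (xs ! k) * (compl_time p xs k - d))"

definition is_solution :: "'j set \<Rightarrow> nat \<Rightarrow> 'j list list \<Rightarrow> bool" where
  "is_solution J m sol \<longleftrightarrow>
     length sol = m \<and>
     (\<forall>i<m. distinct (sol ! i) \<and> set (sol ! i) \<subseteq> J) \<and>
     (\<forall>j\<in>J. \<exists>!i. i < m \<and> j \<in> set (sol ! i))"

definition total_cost :: "('j \<Rightarrow> real) \<Rightarrow> ('j \<Rightarrow> real) \<Rightarrow> real \<Rightarrow> 'j list list \<Rightarrow> real" where
  "total_cost p w d sol = (\<Sum>i<length sol. sched_cost p w d (sol ! i))"

definition is_optimal :: "'j set \<Rightarrow> ('j \<Rightarrow> real) \<Rightarrow> ('j \<Rightarrow> real) \<Rightarrow> real \<Rightarrow> nat \<Rightarrow> 'j list list \<Rightarrow> bool" where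
  "is_optimal J p w d m sol \<longleftrightarrow>
     is_solution J m sol \<and>
     (\<forall>sol'. is_solution J m sol' \<longrightarrow> total_cost p w d sol \<le> total_cost p w d sol')"

end

theory Submission
  imports Defs
begin

text \<open>An exchange argument. Swapping two adjacent jobs a, b that both start at or after d
leaves every other job's start time, and hence its cost, unchanged, and changes the cost of
the schedule by exactly w b * p a - w a * p b. In an optimal solution no such swap can
decrease the cost, so adjacent late jobs satisfy p a / w a \<le> p b / w b. Since processing
times are positive, every job after a late job is late, and the adjacent inequalities chain
together.\<close>

definition swap_adjacent :: "'a list \<Rightarrow> nat \<Rightarrow> 'a list" where
  "swap_adjacent xs k = xs[Suc k := xs ! k, k := xs ! Suc k]"

lemma length_swap_adjacent [simp]: "length (swap_adjacent xs k) = length xs"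
  by (simp add: swap_adjacent_def)

lemma mset_swap_adjacent: "Suc k < length xs \<Longrightarrow> mset (swap_adjacent xs k) = mset xs"
  unfolding swap_adjacent_def by (rule mset_swap) auto

lemma nth_swap_adjacent:
  assumes "Suc k < length xs"
  shows "swap_adjacent xs k ! k = xs ! Suc k"
    and "swap_adjacent xs k ! Suc k = xs ! k"
    and "j \<noteq> k \<Longrightarrow> j \<noteq> Suc k \<Longrightarrow> swap_adjacent xs k ! j = xs ! j"
  using assms by (auto simp: swap_adjacent_def nth_list_update)

lemma start_time_Suc: "start_time p xs (Suc j) = start_time p xs j + p (xs ! j)"
  by (simp add: start_time_def)

lemma start_time_mono:
  assumes "\<forall>x\<in>set xs. p x \<ge> 0" and "i \<le> j" and "j \<le> length xs"
  shows "start_time p xs i \<le> start_time p xs j"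
  using assms(2,3)
proof (induction j rule: dec_induct)
  case (step j)
  then show ?case using assms(1) by (simp add: start_time_Suc add_increasing2)
qed simp

lemma start_time_swap_adjacent:
  assumes "Suc k < length xs" and "j \<noteq> Suc k"
  shows "start_time p (swap_adjacent xs k) j = start_time p xs j"
proof (cases "j \<le> k")
  case True
  then show ?thesis
    unfolding start_time_def using assms(1) by (intro sum.cong) (auto simp: nth_swap_adjacent)
next
  case False
  with assms(2) have "Suc (Suc k) \<le> j" by simp
  then show ?thesis
  proof (induction j rule: dec_induct)
    case base
    have "start_time p (swap_adjacent xs k) k = start_time p xs k"
      unfolding start_time_def using assms(1) by (intro sum.cong) (auto simp: nth_swap_adjacent)
    then show ?case using assms(1) by (simp add: start_time_Suc nth_swap_adjacent)
  next
    case (step j)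
    then show ?case using assms(1) by (simp add: start_time_Suc nth_swap_adjacent)
  qed
qed

definition position_cost :: "('j \<Rightarrow> real) \<Rightarrow> ('j \<Rightarrow> real) \<Rightarrow> real \<Rightarrow> 'j list \<Rightarrow> nat \<Rightarrow> real" where
  "position_cost p w d xs k =
     (if start_time p xs k < d then w (xs ! k) * p (xs ! k)
      else w (xs ! k) * (compl_time p xs k - d))"

lemma sched_cost_eq_sum_position_cost:
  "sched_cost p w d xs = (\<Sum>k<length xs. position_cost p w d xs k)"
  by (simp add: sched_cost_def position_cost_def)

lemma position_cost_swap_adjacent:
  assumes "Suc k < length xs" and "j \<noteq> k" and "j \<noteq> Suc k"
  shows "position_cost p w d (swap_adjacent xs k) j = position_cost p w d xs j"
  using assms
  by (simp add: position_cost_def compl_time_def start_time_swap_adjacent nth_swap_adjacent)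

lemma sched_cost_swap_adjacent_late:
  assumes len: "Suc k < length xs" and late: "start_time p xs k \<ge> d"
    and nonneg: "p (xs ! k) \<ge> 0" "p (xs ! Suc k) \<ge> 0"
  shows "sched_cost p w d (swap_adjacent xs k) =
           sched_cost p w d xs - (w (xs ! Suc k) * p (xs ! k) - w (xs ! k) * p (xs ! Suc k))"
proof -
  let ?ys = "swap_adjacent xs k" and ?S = "start_time p xs k"
  have split: "sched_cost p w d zs = (\<Sum>j\<in>{..<length xs} - {k, Suc k}. position_cost p w d zs j)
      + position_cost p w d zs k + position_cost p w d zs (Suc k)" if "length zs = length xs" for zs
    using len that unfolding sched_cost_eq_sum_position_cost
    by (subst sum.subset_diff[of "{k, Suc k}"]) auto
  have others: "(\<Sum>j\<in>{..<length xs} - {k, Suc k}. position_cost p w d ?ys j)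
      = (\<Sum>j\<in>{..<length xs} - {k, Suc k}. position_cost p w d xs j)"
    using len by (intro sum.cong) (auto simp: position_cost_swap_adjacent)
  have start_ys: "start_time p ?ys k = ?S"
    using len by (simp add: start_time_swap_adjacent)
  have "position_cost p w d xs k = w (xs ! k) * (?S + p (xs ! k) - d)"
    "position_cost p w d xs (Suc k) = w (xs ! Suc k) * (?S + p (xs ! k) + p (xs ! Suc k) - d)"
    "position_cost p w d ?ys k = w (xs ! Suc k) * (?S + p (xs ! Suc k) - d)"
    "position_cost p w d ?ys (Suc k) = w (xs ! k) * (?S + p (xs ! Suc k) + p (xs ! k) - d)"
    using len late nonneg start_ys
    by (simp_all add: position_cost_def compl_time_def start_time_Suc nth_swap_adjacent)
  then show ?thesis
    using split[of xs] split[of ?ys] others by (simp add: algebra_simps)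
qed

lemma total_cost_list_update:
  assumes "i < length sol"
  shows "total_cost p w d (sol[i := ys]) =
           total_cost p w d sol - sched_cost p w d (sol ! i) + sched_cost p w d ys"
proof -
  have "(\<Sum>j\<in>{..<length sol} - {i}. sched_cost p w d (sol[i := ys] ! j)) =
        (\<Sum>j\<in>{..<length sol} - {i}. sched_cost p w d (sol ! j))"
    by (intro sum.cong) auto
  then show ?thesis
    using assms unfolding total_cost_def by (simp add: sum.remove[of _ i])
qed

lemma is_solution_list_update:
  assumes "is_solution J m sol" and "i < m" and "mset ys = mset (sol ! i)"
  shows "is_solution J m (sol[i := ys])"
proof -
  have "set ys = set (sol ! i)" and "distinct ys = distinct (sol ! i)"
    using assms(3) by (auto dest: mset_eq_setD mset_eq_imp_distinct_iff)
  then show ?thesis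
    using assms(1,2) unfolding is_solution_def by (auto simp: nth_list_update)
qed

lemma optimal_solution_machine_minimal:
  assumes "is_optimal J p w d m sol" and "i < m" and "mset ys = mset (sol ! i)"
  shows "sched_cost p w d (sol ! i) \<le> sched_cost p w d ys"
proof -
  have "is_solution J m sol" and "length sol = m"
    using assms(1) by (auto simp: is_optimal_def is_solution_def)
  have "is_solution J m (sol[i := ys])"
    using \<open>is_solution J m sol\<close> assms(2,3) by (rule is_solution_list_update)
  then have "total_cost p w d sol \<le> total_cost p w d (sol[i := ys])"
    using assms(1) by (simp add: is_optimal_def)
  with \<open>length sol = m\<close> assms(2) show ?thesis by (simp add: total_cost_list_update)
qed

lemma late_jobs_wspt_ordered:
  assumes pos: "\<forall>x\<in>set xs. p x > 0 \<and> w x > 0"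
    and minimal: "\<And>ys. mset ys = mset xs \<Longrightarrow> sched_cost p w d xs \<le> sched_cost p w d ys"
    and "a \<le> b" and "b < length xs" and late: "start_time p xs a \<ge> d"
  shows "p (xs ! a) / w (xs ! a) \<le> p (xs ! b) / w (xs ! b)"
  using assms(3,4)
proof (induction b rule: dec_induct)
  case (step k)
  have k: "Suc k < length xs" using step.hyps(2) step.prems by simp
  have pos_k: "p (xs ! k) > 0" "w (xs ! k) > 0" "p (xs ! Suc k) > 0" "w (xs ! Suc k) > 0"
    using pos k by auto
  have "d \<le> start_time p xs k"
    using late start_time_mono[of xs p a k] pos step.hyps k by fastforce
  then have "sched_cost p w d (swap_adjacent xs k) =
      sched_cost p w d xs - (w (xs ! Suc k) * p (xs ! k) - w (xs ! k) * p (xs ! Suc k))"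
    using k pos_k by (simp add: sched_cost_swap_adjacent_late)
  moreover have "sched_cost p w d xs \<le> sched_cost p w d (swap_adjacent xs k)"
    using k by (simp add: minimal mset_swap_adjacent)
  ultimately have "w (xs ! Suc k) * p (xs ! k) \<le> w (xs ! k) * p (xs ! Suc k)" by simp
  then have "p (xs ! k) / w (xs ! k) \<le> p (xs ! Suc k) / w (xs ! Suc k)"
    using pos_k by (simp add: divide_simps mult.commute)
  with step.IH k show ?case by simp
qed simp

theorem lemma1:
  fixes J :: "'j set" and p w :: "'j \<Rightarrow> real" and d :: real and m :: nat
    and sol :: "'j list list"
  assumes "finite J"
    and "\<forall>j\<in>J. p j > 0"
    and "\<forall>j\<in>J. w j > 0"
    and "d \<ge> 0"
    and "m \<ge> 1"
    and "is_optimal J p w d m sol"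
  shows "\<forall>i<m. \<forall>a b. a < b \<and> b < length (sol ! i) \<and> start_time p (sol ! i) a \<ge> d \<longrightarrow>
            p (sol ! i ! a) / w (sol ! i ! a) \<le> p (sol ! i ! b) / w (sol ! i ! b)"
proof (intro allI impI)
  fix i a b
  assume "i < m" and ab: "a < b \<and> b < length (sol ! i) \<and> start_time p (sol ! i) a \<ge> d"
  have "set (sol ! i) \<subseteq> J"
    using assms(6) \<open>i < m\<close> by (simp add: is_optimal_def is_solution_def)
  then have "\<forall>x\<in>set (sol ! i). p x > 0 \<and> w x > 0"
    using assms(2,3) by blast
  moreover have "\<And>ys. mset ys = mset (sol ! i) \<Longrightarrow> sched_cost p w d (sol ! i) \<le> sched_cost p w d ys"
    using assms(6) \<open>i < m\<close> by (rule optimal_solution_machine_minimal)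
  ultimately show "p (sol ! i ! a) / w (sol ! i ! a) \<le> p (sol ! i ! b) / w (sol ! i ! b)"
    using ab by (intro late_jobs_wspt_ordered) auto
qed

end
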